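(* Let $A=(V,\mathcal E)$ be a finite tree (with at least one vertex). Consider the following three triples $(B,\mathcal R,G)\subset V\times\mathcal E\times V$ (more precisely $B\subseteq V$, $\mathcal R\subseteq \mathcal E$, $G\subseteq V$): (i) $B$ is the positive vertex-backbone of $A$, $\mathcal R$ is the set of exclusive edges of $A$, and $G$ is the negative vertex-backbone of $A$; (ii) $B$ is the set of unavoidable vertices of $A$, $\mathcal R$ is the positive edge-backbone of $A$, and $G$ is the set of optional vertices of $A$; (iii) a tricoloring $(B,\mathcal R,G)$ of $A$ such that: the edges in $\mathcal R$ are pairwise non-adjacent (share no end-vertex); every edge with one end-vertex in $G$ has its other end-vertex in $B$; and each vertex in $B$ is joined to vertices of $G$ by at least two edges. Then the triples defined in (i) and in (ii) are tricolorings of $A$, there is exactly one tricoloring of $A$ satisfying (iii), and these three tricolorings are one and the same.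
   Context: Graphs are simple (no loops, no multiple edges). A vertex cover of $A=(V,\mathcal E)$ is a subset of $V$ containing at least one end-vertex of every edge; a minimal vertex cover is one of smallest cardinality. The positive (resp. negative) vertex-backbone is the set of vertices belonging to every (resp. no) minimal vertex cover; the other vertices are called degenerate. An edge joining two degenerate vertices is called exclusive if no minimal vertex cover contains both of its end-vertices. A matching is a set of pairwise non-adjacent edges; a maximal matching is one of largest cardinality. The positive edge-backbone is the set of edges belonging to every maximal matching. A vertex is optional if there is a maximal matching none of whose edges has it as an end-vertex. A vertex is unavoidable if it is neither optional nor an end-vertex of an edge in the positive edge-backbone. A tricoloring of $A$ is a triple $(B,\mathcal R,G)$ with $B,G\subseteq V$ and $\mathcal R\subseteq\mathcal E$ such that $B$, $G$ and the set of end-vertices of edges in $\mathcal R$ form a partition of $V$ (parts allowed to be empty). *)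

theory Defs
  imports Main
begin

definition simple_graph :: "'a set \<Rightarrow> 'a set set \<Rightarrow> bool" where
  "simple_graph V E \<longleftrightarrow>
     (\<forall>e\<in>E. \<exists>x y. x \<in> V \<and> y \<in> V \<and> x \<noteq> y \<and> e = {x, y})"

definition adj_rel :: "'a set set \<Rightarrow> ('a \<times> 'a) set" where
  "adj_rel E = {(x, y). {x, y} \<in> E}"

definition connected_graph :: "'a set \<Rightarrow> 'a set set \<Rightarrow> bool" where
  "connected_graph V E \<longleftrightarrow> (\<forall>u\<in>V. \<forall>v\<in>V. (u, v) \<in> (adj_rel E)\<^sup>*)"

definition is_cycle :: "'a set set \<Rightarrow> 'a list \<Rightarrow> bool" where
  "is_cycle E cs \<longleftrightarrow> length cs \<ge> 3 \<and> distinct cs \<and>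
     (\<forall>i. Suc i < length cs \<longrightarrow> {cs ! i, cs ! Suc i} \<in> E) \<and>
     {last cs, hd cs} \<in> E"

definition acyclic_graph :: "'a set set \<Rightarrow> bool" where
  "acyclic_graph E \<longleftrightarrow> \<not> (\<exists>cs. is_cycle E cs)"

definition finite_tree :: "'a set \<Rightarrow> 'a set set \<Rightarrow> bool" where
  "finite_tree V E \<longleftrightarrow> finite V \<and> V \<noteq> {} \<and> simple_graph V E \<and>
     connected_graph V E \<and> acyclic_graph E"

definition vertex_cover :: "'a set \<Rightarrow> 'a set set \<Rightarrow> 'a set \<Rightarrow> bool" where
  "vertex_cover V E C \<longleftrightarrow> C \<subseteq> V \<and> (\<forall>e\<in>E. e \<inter> C \<noteq> {})"

definition min_vertex_cover :: "'a set \<Rightarrow> 'a set set \<Rightarrow> 'a set \<Rightarrow> bool" where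
  "min_vertex_cover V E C \<longleftrightarrow> vertex_cover V E C \<and>
     (\<forall>C'. vertex_cover V E C' \<longrightarrow> card C \<le> card C')"

definition pos_vertex_backbone :: "'a set \<Rightarrow> 'a set set \<Rightarrow> 'a set" where
  "pos_vertex_backbone V E = {v \<in> V. \<forall>C. min_vertex_cover V E C \<longrightarrow> v \<in> C}"

definition neg_vertex_backbone :: "'a set \<Rightarrow> 'a set set \<Rightarrow> 'a set" where
  "neg_vertex_backbone V E = {v \<in> V. \<forall>C. min_vertex_cover V E C \<longrightarrow> v \<notin> C}"

definition degenerate :: "'a set \<Rightarrow> 'a set set \<Rightarrow> 'a \<Rightarrow> bool" where
  "degenerate V E v \<longleftrightarrow> v \<in> V \<and> v \<notin> pos_vertex_backbone V E \<and>
     v \<notin> neg_vertex_backbone V E"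

definition exclusive_edges :: "'a set \<Rightarrow> 'a set set \<Rightarrow> 'a set set" where
  "exclusive_edges V E = {e \<in> E. (\<forall>v\<in>e. degenerate V E v) \<and>
     \<not> (\<exists>C. min_vertex_cover V E C \<and> e \<subseteq> C)}"

definition matching :: "'a set set \<Rightarrow> 'a set set \<Rightarrow> bool" where
  "matching E M \<longleftrightarrow> M \<subseteq> E \<and> (\<forall>e1\<in>M. \<forall>e2\<in>M. e1 \<noteq> e2 \<longrightarrow> e1 \<inter> e2 = {})"

definition max_matching :: "'a set set \<Rightarrow> 'a set set \<Rightarrow> bool" where
  "max_matching E M \<longleftrightarrow> matching E M \<and>
     (\<forall>M'. matching E M' \<longrightarrow> card M' \<le> card M)"

definition pos_edge_backbone :: "'a set set \<Rightarrow> 'a set set" where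
  "pos_edge_backbone E = {e \<in> E. \<forall>M. max_matching E M \<longrightarrow> e \<in> M}"

definition optional_vertices :: "'a set \<Rightarrow> 'a set set \<Rightarrow> 'a set" where
  "optional_vertices V E = {v \<in> V. \<exists>M. max_matching E M \<and> (\<forall>e\<in>M. v \<notin> e)}"

definition unavoidable_vertices :: "'a set \<Rightarrow> 'a set set \<Rightarrow> 'a set" where
  "unavoidable_vertices V E = {v \<in> V. v \<notin> optional_vertices V E \<and>
     \<not> (\<exists>e\<in>pos_edge_backbone E. v \<in> e)}"

definition tricoloring :: "'a set \<Rightarrow> 'a set set \<Rightarrow> 'a set \<times> 'a set set \<times> 'a set \<Rightarrow> bool" where
  "tricoloring V E T \<longleftrightarrow> (case T of (B, R, G) \<Rightarrow>
     B \<subseteq> V \<and> R \<subseteq> E \<and> G \<subseteq> V \<and>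
     B \<union> \<Union>R \<union> G = V \<and>
     B \<inter> \<Union>R = {} \<and> B \<inter> G = {} \<and> \<Union>R \<inter> G = {})"

definition cond_iii :: "'a set \<Rightarrow> 'a set set \<Rightarrow> 'a set \<times> 'a set set \<times> 'a set \<Rightarrow> bool" where
  "cond_iii V E T \<longleftrightarrow> tricoloring V E T \<and> (case T of (B, R, G) \<Rightarrow>
     (\<forall>e1\<in>R. \<forall>e2\<in>R. e1 \<noteq> e2 \<longrightarrow> e1 \<inter> e2 = {}) \<and>
     (\<forall>e\<in>E. \<forall>g\<in>G. g \<in> e \<longrightarrow> e - {g} \<subseteq> B) \<and>
     (\<forall>b\<in>B. card {e \<in> E. b \<in> e \<and> e \<inter> G \<noteq> {}} \<ge> 2))"

definition triple_i :: "'a set \<Rightarrow> 'a set set \<Rightarrow> 'a set \<times> 'a set set \<times> 'a set" where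
  "triple_i V E = (pos_vertex_backbone V E, exclusive_edges V E, neg_vertex_backbone V E)"

definition triple_ii :: "'a set \<Rightarrow> 'a set set \<Rightarrow> 'a set \<times> 'a set set \<times> 'a set" where
  "triple_ii V E = (unavoidable_vertices V E, pos_edge_backbone E, optional_vertices V E)"

end

theory Submission
  imports Defs
begin

text \<open>
  Existence of a tricoloring as in (iii) is proved by induction on the number of vertices:
  delete a leaf w together with its neighbour p and tricolor the rest; then either p has a
  neighbour in G, and p joins B while w joins G, or it has none, and the edge {p, w} joins R.

  Conversely, let (B, R, G) be as in (iii) and root the tree at an arbitrary vertex r. Every
  b in B has two neighbours in G but only one parent, hence a child in G; matching each b with
  such a child and adding R gives a matching of size |B| + |R|, while B together with the upper
  end-vertex of every edge of R is a vertex cover of the same size. By weak duality both are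
  optimal, so the minimal covers and maximal matchings are exactly the covers and matchings of
  size |B| + |R|; consequently every vertex of a minimal cover is matched by every maximal
  matching, and no edge of a maximal matching lies inside a minimal cover. Choosing the root
  suitably (in G, so that it stays unmatched; on an edge of R, so that it enters the cover)
  then identifies the backbones, the exclusive edges and the optional vertices with B, R and G.
\<close>

section \<open>Paths in an edge set\<close>

lemma adj_rel_iff [simp]: "(x, y) \<in> adj_rel F \<longleftrightarrow> {x, y} \<in> F"
  by (simp add: adj_rel_def)

lemma adj_rel_rtrancl_sym: "(x, y) \<in> (adj_rel F)\<^sup>* \<Longrightarrow> (y, x) \<in> (adj_rel F)\<^sup>*"
proof -
  have "sym (adj_rel F)"
    by (auto simp: sym_def insert_commute)
  then show "(x, y) \<in> (adj_rel F)\<^sup>* \<Longrightarrow> (y, x) \<in> (adj_rel F)\<^sup>*"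
    by (meson sym_rtrancl symD)
qed

lemma adj_rel_rtrancl_mono: "F \<subseteq> F' \<Longrightarrow> (x, y) \<in> (adj_rel F)\<^sup>* \<Longrightarrow> (x, y) \<in> (adj_rel F')\<^sup>*"
  by (meson adj_rel_iff rtrancl_mono subrelI subsetD)

lemma adj_rel_rtrancl_edge: "{x, y} \<in> F \<Longrightarrow> (y, z) \<in> (adj_rel F)\<^sup>* \<Longrightarrow> (x, z) \<in> (adj_rel F)\<^sup>*"
  by (simp add: converse_rtrancl_into_rtrancl)

lemma adj_rel_rtrancl_remove_edge:
  assumes "(a, b) \<in> (adj_rel F)\<^sup>*"
  shows "(a, b) \<in> (adj_rel (F - {e}))\<^sup>* \<or> (\<exists>z\<in>e. (z, b) \<in> (adj_rel (F - {e}))\<^sup>*)"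
  using assms
proof (induction rule: converse_rtrancl_induct)
  case (step y z)
  then show ?case
    by (cases "{y, z} = e") (auto intro: converse_rtrancl_into_rtrancl)
qed simp

lemma adj_rel_relpow_remove_edge:
  assumes "(a, b) \<in> adj_rel F ^^ m"
  shows "(a, b) \<in> (adj_rel (F - {e}))\<^sup>* \<or> (\<forall>z\<in>e. \<exists>j\<le>m. (z, b) \<in> adj_rel F ^^ j)"
  using assms
proof (induction m arbitrary: a)
  case (Suc m)
  then obtain y where ay: "{a, y} \<in> F" and yb: "(y, b) \<in> adj_rel F ^^ m"
    by (metis adj_rel_iff relpow_Suc_E2)
  show ?case
  proof (cases "{a, y} = e")
    case True
    then show ?thesis
      using Suc.prems yb le_Suc_eq by blast
  next
    case False
    then have "{a, y} \<in> F - {e}"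
      using ay by blast
    with Suc.IH[OF yb] show ?thesis
      by (meson adj_rel_rtrancl_edge le_SucI)
  qed
qed simp

lemma adj_rel_rtrancl_simple_path:
  assumes "(a, b) \<in> (adj_rel F)\<^sup>*"
  obtains xs where "xs \<noteq> []" "hd xs = a" "last xs = b" "distinct xs"
    "successively (\<lambda>u v. {u, v} \<in> F) xs"
proof -
  from assms have "\<exists>xs. xs \<noteq> [] \<and> hd xs = a \<and> last xs = b \<and> distinct xs \<and>
     successively (\<lambda>u v. {u, v} \<in> F) xs"
  proof (induction rule: converse_rtrancl_induct)
    case base
    show ?case by (intro exI[of _ "[b]"]) auto
  next
    case (step y z)
    then obtain xs where xs: "xs \<noteq> []" "hd xs = z" "last xs = b" "distinct xs"
       "successively (\<lambda>u v. {u, v} \<in> F) xs" by blast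
    show ?case
    proof (cases "y \<in> set xs")
      case True
      then obtain us vs where "xs = us @ y # vs" by (meson split_list)
      with xs show ?thesis
        by (intro exI[of _ "y # vs"]) (auto simp: successively_append_iff)
    next
      case False
      with xs step.hyps(1) show ?thesis
        by (intro exI[of _ "y # xs"]) (cases xs, auto)
    qed
  qed
  with that show thesis by blast
qed

section \<open>Matchings and vertex covers\<close>

lemma matching_cover_choice:
  assumes M: "matching E M" and C: "\<forall>e\<in>E. e \<inter> C \<noteq> {}"
  obtains f where "inj_on f M" "\<forall>e\<in>M. f e \<in> e \<inter> C"
proof -
  define f where "f e = (SOME c. c \<in> e \<inter> C)" for e
  have f: "f e \<in> e \<inter> C" if "e \<in> M" for e
  proof -
    have "e \<in> E"
      using that M unfolding matching_def by blast
    then have "\<exists>c. c \<in> e \<inter> C"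
      using C by blast
    then show ?thesis
      unfolding f_def by (rule someI_ex)
  qed
  have "inj_on f M"
  proof (rule inj_onI)
    fix e1 e2 assume e: "e1 \<in> M" "e2 \<in> M" "f e1 = f e2"
    then have "f e1 \<in> e1 \<inter> e2"
      using f[OF e(1)] f[OF e(2)] by simp
    then show "e1 = e2"
      using M e unfolding matching_def by blast
  qed
  then show thesis
    using f that by blast
qed

lemma card_matching_le_card_cover:
  assumes "finite V" "matching E M" "vertex_cover V E C"
  shows "card M \<le> card C"
proof -
  obtain f where "inj_on f M" "\<forall>e\<in>M. f e \<in> e \<inter> C"
    using assms matching_cover_choice unfolding vertex_cover_def by metis
  moreover have "finite C"
    using assms finite_subset unfolding vertex_cover_def by blast
  ultimately show ?thesis
    by (intro card_inj_on_le) auto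
qed

lemma tight_matching_cover:
  assumes V: "finite V" and M: "matching E M" and C: "vertex_cover V E C"
    and le: "card C \<le> card M"
  shows "C \<subseteq> \<Union>M"
    and "e \<in> M \<Longrightarrow> x \<in> e \<inter> C \<Longrightarrow> y \<in> e \<inter> C \<Longrightarrow> x = y"
proof -
  obtain f where inj: "inj_on f M" and f: "\<forall>e\<in>M. f e \<in> e \<inter> C"
    using M C matching_cover_choice unfolding vertex_cover_def by metis
  have "finite C"
    using V C finite_subset unfolding vertex_cover_def by blast
  moreover have "f ` M \<subseteq> C"
    using f by blast
  moreover have "card C \<le> card (f ` M)"
    using le card_image[OF inj] by simp
  ultimately have fM: "f ` M = C"
    using card_seteq by blast
  then show "C \<subseteq> \<Union>M"
    using f by blast
  assume e: "e \<in> M" and "x \<in> e \<inter> C" "y \<in> e \<inter> C"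
  show "x = y"
  proof (rule ccontr)
    assume "x \<noteq> y"
    then obtain c where c: "c \<in> e \<inter> C" "c \<noteq> f e"
      using \<open>x \<in> e \<inter> C\<close> \<open>y \<in> e \<inter> C\<close> by blast
    then obtain e' where e': "e' \<in> M" "c = f e'"
      using fM by blast
    then have "e' \<noteq> e" and "c \<in> e \<inter> e'"
      using c f by auto
    then show False
      using M e e'(1) unfolding matching_def by blast
  qed
qed

lemma min_vertex_cover_iff_card:
  assumes V: "finite V" and M0: "matching E M0" and C0: "vertex_cover V E C0"
    and eq: "card C0 = card M0"
  shows "min_vertex_cover V E C \<longleftrightarrow> vertex_cover V E C \<and> card C = card M0"
proof
  assume C: "min_vertex_cover V E C"
  then have "card C \<le> card C0" and "card M0 \<le> card C"
    using C0 card_matching_le_card_cover[OF V M0] unfolding min_vertex_cover_def by auto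
  with C eq show "vertex_cover V E C \<and> card C = card M0"
    unfolding min_vertex_cover_def by simp
next
  assume "vertex_cover V E C \<and> card C = card M0"
  then show "min_vertex_cover V E C"
    using card_matching_le_card_cover[OF V M0] unfolding min_vertex_cover_def by simp
qed

lemma max_matching_iff_card:
  assumes V: "finite V" and M0: "matching E M0" and C0: "vertex_cover V E C0"
    and eq: "card C0 = card M0"
  shows "max_matching E M \<longleftrightarrow> matching E M \<and> card M = card M0"
proof
  assume M: "max_matching E M"
  then have "card M0 \<le> card M" and "card M \<le> card C0"
    using M0 card_matching_le_card_cover[OF V _ C0] unfolding max_matching_def by auto
  with M eq show "matching E M \<and> card M = card M0"
    unfolding max_matching_def by simp
next
  assume "matching E M \<and> card M = card M0"
  then show "max_matching E M"
    using card_matching_le_card_cover[OF V _ C0] eq unfolding max_matching_def by simp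
qed

section \<open>Rooted forests\<close>

text \<open>\<^term>\<open>tree_parent E r v w\<close>: v is the parent of w when the component of r is rooted at r.\<close>

definition tree_parent :: "'a set set \<Rightarrow> 'a \<Rightarrow> 'a \<Rightarrow> 'a \<Rightarrow> bool" where
  "tree_parent E r v w \<longleftrightarrow> {v, w} \<in> E \<and> (v, r) \<in> (adj_rel (E - {{v, w}}))\<^sup>*"

definition depth :: "'a set set \<Rightarrow> 'a \<Rightarrow> 'a \<Rightarrow> nat" where
  "depth E r v = (LEAST n. (v, r) \<in> adj_rel E ^^ n)"

lemma depth_relpow: "(v, r) \<in> (adj_rel E)\<^sup>* \<Longrightarrow> (v, r) \<in> adj_rel E ^^ depth E r v"
  unfolding depth_def by (meson LeastI_ex rtrancl_imp_relpow)

lemma depth_le: "(v, r) \<in> adj_rel E ^^ n \<Longrightarrow> depth E r v \<le> n"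
  unfolding depth_def by (rule Least_le)

lemma depth_root: "depth E r r = 0"
  by (meson depth_le le_zero_eq relpow_0_I)

lemma tree_parent_rtrancl:
  assumes "tree_parent E r v w"
  shows "(v, r) \<in> (adj_rel E)\<^sup>*" and "(w, r) \<in> (adj_rel E)\<^sup>*"
proof -
  show vr: "(v, r) \<in> (adj_rel E)\<^sup>*"
    using assms unfolding tree_parent_def by (meson Diff_subset adj_rel_rtrancl_mono)
  have "{w, v} \<in> E"
    using assms unfolding tree_parent_def by (simp add: insert_commute)
  then show "(w, r) \<in> (adj_rel E)\<^sup>*"
    using vr by (rule adj_rel_rtrancl_edge)
qed

lemma acyclic_graph_subset: "acyclic_graph E' \<Longrightarrow> E \<subseteq> E' \<Longrightarrow> acyclic_graph E"
  unfolding acyclic_graph_def is_cycle_def by blast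

locale forest =
  fixes V :: "'a set" and E :: "'a set set"
  assumes finite_V: "finite V" and simple: "simple_graph V E" and acyclic: "acyclic_graph E"
begin

lemma edgeE:
  assumes "e \<in> E"
  obtains x y where "x \<in> V" "y \<in> V" "x \<noteq> y" "e = {x, y}"
  using assms simple unfolding simple_graph_def by blast

lemma edge_subset_V: "e \<in> E \<Longrightarrow> e \<subseteq> V"
  by (elim edgeE) simp

lemma finite_E: "finite E"
proof (rule finite_subset)
  show "E \<subseteq> Pow V"
    using edge_subset_V by blast
qed (simp add: finite_V)

lemma edge_distinct: "{x, y} \<in> E \<Longrightarrow> x \<noteq> y"
  by (elim edgeE) auto

lemma edge_other_end: "e \<in> E \<Longrightarrow> x \<in> e \<Longrightarrow> \<exists>y. y \<noteq> x \<and> e = {x, y}"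
  by (elim edgeE) auto

lemma edge_eq_doubleton: "e \<in> E \<Longrightarrow> x \<in> e \<Longrightarrow> y \<in> e \<Longrightarrow> x \<noteq> y \<Longrightarrow> e = {x, y}"
  by (elim edgeE) auto

lemma two_le_card_edges_into:
  assumes "{b, x} \<in> E" "{b, y} \<in> E" "x \<noteq> y" "x \<in> G" "y \<in> G"
  shows "2 \<le> card {e \<in> E. b \<in> e \<and> e \<inter> G \<noteq> {}}"
proof -
  have "{b, x} \<noteq> {b, y}"
    using assms(3) by (auto simp: doubleton_eq_iff)
  moreover have "{{b, x}, {b, y}} \<subseteq> {e \<in> E. b \<in> e \<and> e \<inter> G \<noteq> {}}"
    using assms by auto
  ultimately show ?thesis
    using card_mono[OF _ \<open>{{b, x}, {b, y}} \<subseteq> _\<close>] finite_E by simp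
qed

lemma edge_is_bridge:
  assumes e: "{x, y} \<in> E"
  shows "(x, y) \<notin> (adj_rel (E - {{x, y}}))\<^sup>*"
proof
  assume "(x, y) \<in> (adj_rel (E - {{x, y}}))\<^sup>*"
  then obtain xs where xs: "xs \<noteq> []" "hd xs = x" "last xs = y" "distinct xs"
     "successively (\<lambda>u v. {u, v} \<in> E - {{x, y}}) xs"
    by (rule adj_rel_rtrancl_simple_path)
  have "x \<noteq> y"
    using e by (rule edge_distinct)
  moreover have "xs \<noteq> [x, y]"
    using xs(5) by auto
  ultimately have "length xs \<ge> 3"
    using xs(1-3) by (cases xs rule: remdups_adj.cases) (auto simp: Suc_le_eq)
  moreover have "{last xs, hd xs} \<in> E"
    using e xs(2,3) by (simp add: insert_commute)
  ultimately have "is_cycle E xs"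
    using xs(4,5) successively_nth[OF xs(5)] unfolding is_cycle_def by auto
  then show False
    using acyclic unfolding acyclic_graph_def by blast
qed

lemma tree_parent_child_cut_off:
  assumes "tree_parent E r v w"
  shows "(w, r) \<notin> (adj_rel (E - {{v, w}}))\<^sup>*"
proof
  have vw: "{w, v} = {v, w}"
    by blast
  assume "(w, r) \<in> (adj_rel (E - {{v, w}}))\<^sup>*"
  moreover have "(r, v) \<in> (adj_rel (E - {{v, w}}))\<^sup>*"
    using assms unfolding tree_parent_def by (simp add: adj_rel_rtrancl_sym)
  ultimately have "(w, v) \<in> (adj_rel (E - {{w, v}}))\<^sup>*"
    unfolding vw by (rule rtrancl_trans)
  moreover have "{w, v} \<in> E"
    using assms unfolding tree_parent_def vw by blast
  ultimately show False
    using edge_is_bridge by blast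
qed

lemma tree_parent_root: "\<not> tree_parent E r v r"
  using tree_parent_child_cut_off by blast

lemma tree_parent_asym: "tree_parent E r v w \<Longrightarrow> \<not> tree_parent E r w v"
  using tree_parent_child_cut_off[of r v w] unfolding tree_parent_def by (simp add: insert_commute)

lemma tree_parent_unique:
  assumes p1: "tree_parent E r v1 w" and p2: "tree_parent E r v2 w"
  shows "v1 = v2"
proof (rule ccontr)
  \<comment> \<open>Otherwise w could reach r without using one of its two parent edges.\<close>
  assume "v1 \<noteq> v2"
  define e1 where "e1 = {v1, w}"
  define e2 where "e2 = {v2, w}"
  have "e1 \<noteq> e2"
    using \<open>v1 \<noteq> v2\<close> unfolding e1_def e2_def by (auto simp: doubleton_eq_iff)
  moreover have "{w, v1} = e1" "{w, v2} = e2"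
    unfolding e1_def e2_def by blast+
  ultimately have e1: "{w, v1} \<in> E - {e2}" and e2: "{w, v2} \<in> E - {e1}"
    using p1 p2 unfolding tree_parent_def e1_def e2_def by auto
  have cut1: "(w, r) \<notin> (adj_rel (E - {e1}))\<^sup>*"
    unfolding e1_def by (rule tree_parent_child_cut_off[OF p1])
  have cut2: "(w, r) \<notin> (adj_rel (E - {e2}))\<^sup>*"
    unfolding e2_def by (rule tree_parent_child_cut_off[OF p2])
  have "(v1, r) \<in> (adj_rel (E - {e1}))\<^sup>*"
    using p1 unfolding tree_parent_def e1_def by simp
  from adj_rel_rtrancl_remove_edge[OF this, of e2]
  show False
  proof
    assume "(v1, r) \<in> (adj_rel (E - {e1} - {e2}))\<^sup>*"
    then have "(v1, r) \<in> (adj_rel (E - {e2}))\<^sup>*"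
      by (rule adj_rel_rtrancl_mono[rotated]) blast
    with cut2 show False
      using adj_rel_rtrancl_edge[OF e1] by simp
  next
    assume "\<exists>z\<in>e2. (z, r) \<in> (adj_rel (E - {e1} - {e2}))\<^sup>*"
    then obtain z where z: "z \<in> {v2, w}" "(z, r) \<in> (adj_rel (E - {e1} - {e2}))\<^sup>*"
      unfolding e2_def by blast
    have "(z, r) \<in> (adj_rel (E - {e1}))\<^sup>*"
      by (rule adj_rel_rtrancl_mono[rotated, OF z(2)]) blast
    with z(1) cut1 show False
      using adj_rel_rtrancl_edge[OF e2] by auto
  qed
qed

lemma tree_parent_edge:
  assumes "{v, w} \<in> E" and "(v, r) \<in> (adj_rel E)\<^sup>*"
  shows "tree_parent E r v w \<or> tree_parent E r w v"
  using adj_rel_rtrancl_remove_edge[OF assms(2), of "{v, w}"] assms(1)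
  unfolding tree_parent_def by (auto simp: insert_commute)

lemma tree_parent_exists:
  assumes vr: "(v, r) \<in> (adj_rel E)\<^sup>*" and "v \<noteq> r"
  obtains x where "tree_parent E r x v" "depth E r x < depth E r v"
proof -
  obtain m where m: "depth E r v = Suc m"
    using depth_relpow[OF vr] \<open>v \<noteq> r\<close> by (cases "depth E r v") auto
  then obtain x where vx: "{v, x} \<in> E" and xr: "(x, r) \<in> adj_rel E ^^ m"
    using depth_relpow[OF vr] by (metis adj_rel_iff relpow_Suc_E2)
  from adj_rel_relpow_remove_edge[OF xr, of "{v, x}"]
  have "(x, r) \<in> (adj_rel (E - {{v, x}}))\<^sup>*"
  proof
    assume "\<forall>z\<in>{v, x}. \<exists>j\<le>m. (z, r) \<in> adj_rel E ^^ j"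
    then obtain j where "j \<le> m" "(v, r) \<in> adj_rel E ^^ j"
      by blast
    then show ?thesis
      using depth_le m by fastforce
  qed
  then have "tree_parent E r x v"
    using vx unfolding tree_parent_def by (simp add: insert_commute)
  moreover have "depth E r x < depth E r v"
    using depth_le[OF xr] m by simp
  ultimately show thesis
    by (rule that)
qed

lemma depth_tree_parent_less:
  assumes "tree_parent E r x v" and "(v, r) \<in> (adj_rel E)\<^sup>*"
  shows "depth E r x < depth E r v"
proof -
  have "v \<noteq> r"
    using assms(1) tree_parent_root by blast
  then obtain x' where "tree_parent E r x' v" "depth E r x' < depth E r v"
    by (rule tree_parent_exists[OF assms(2)])
  then show ?thesis
    using assms(1) tree_parent_unique by blast
qed

lemma adj_rel_rtrancl_in_V: "(v, r) \<in> (adj_rel E)\<^sup>* \<Longrightarrow> r \<in> V \<Longrightarrow> v \<in> V"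
  by (induction rule: converse_rtrancl_induct) (use edge_subset_V in auto)

lemma deepest_vertex_is_leaf:
  assumes cr: "(c, r) \<in> (adj_rel E)\<^sup>*"
    and deepest: "\<And>v. (v, r) \<in> (adj_rel E)\<^sup>* \<Longrightarrow> depth E r v \<le> depth E r c"
    and parent: "tree_parent E r x c" and cy: "{c, y} \<in> E"
  shows "y = x"
  using tree_parent_edge[OF cy cr]
proof
  assume cy_parent: "tree_parent E r c y"
  then have "(y, r) \<in> (adj_rel E)\<^sup>*"
    by (rule tree_parent_rtrancl)
  with cy_parent have "depth E r c < depth E r y"
    by (rule depth_tree_parent_less)
  with deepest[OF \<open>(y, r) \<in> _\<close>] show ?thesis
    by simp
next
  assume "tree_parent E r y c"
  then show ?thesis
    using parent by (rule tree_parent_unique)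
qed

lemma deepest_vertex_exists:
  assumes "a \<in> V"
  obtains w where "(w, a) \<in> (adj_rel E)\<^sup>*"
    and "\<And>v. (v, a) \<in> (adj_rel E)\<^sup>* \<Longrightarrow> depth E a v \<le> depth E a w"
proof -
  define K where "K = {v. (v, a) \<in> (adj_rel E)\<^sup>*}"
  have "K \<subseteq> V"
    unfolding K_def using assms by (auto intro: adj_rel_rtrancl_in_V)
  then have "finite K"
    using finite_V finite_subset by blast
  moreover have "a \<in> K"
    unfolding K_def by simp
  ultimately have "Max (depth E a ` K) \<in> depth E a ` K"
    by (intro Max_in) auto
  then obtain w where "w \<in> K" and w_max: "depth E a w = Max (depth E a ` K)"
    by auto
  show thesis
  proof (rule that)
    show "(w, a) \<in> (adj_rel E)\<^sup>*"
      using \<open>w \<in> K\<close> unfolding K_def by simp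
    show "depth E a v \<le> depth E a w" if "(v, a) \<in> (adj_rel E)\<^sup>*" for v
      using that \<open>finite K\<close> unfolding w_max K_def by simp
  qed
qed

lemma leaf_exists:
  assumes "E \<noteq> {}"
  obtains p w where "{p, w} \<in> E" "\<And>y. {w, y} \<in> E \<Longrightarrow> y = p"
proof -
  obtain e where "e \<in> E"
    using assms by blast
  then obtain a b where "a \<in> V" "a \<noteq> b" "e = {a, b}"
    by (rule edgeE)
  with \<open>e \<in> E\<close> have "{b, a} \<in> E"
    by (simp add: insert_commute)
  then have ba: "(b, a) \<in> (adj_rel E)\<^sup>*"
    by (simp add: adj_rel_rtrancl_edge)
  obtain w where wa: "(w, a) \<in> (adj_rel E)\<^sup>*"
    and deepest: "\<And>v. (v, a) \<in> (adj_rel E)\<^sup>* \<Longrightarrow> depth E a v \<le> depth E a w"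
    using \<open>a \<in> V\<close> by (rule deepest_vertex_exists) blast
  have "w \<noteq> a"
  proof
    assume "w = a"
    then have "depth E a b = 0"
      using deepest[OF ba] by (simp add: depth_root)
    then have "(b, a) \<in> adj_rel E ^^ 0"
      using depth_relpow[OF ba] by simp
    with \<open>a \<noteq> b\<close> show False
      by simp
  qed
  with wa obtain p where "tree_parent E a p w"
    by (rule tree_parent_exists)
  then have "{p, w} \<in> E" "\<And>y. {w, y} \<in> E \<Longrightarrow> y = p"
    using deepest_vertex_is_leaf[OF wa deepest] unfolding tree_parent_def by auto
  then show thesis
    by (rule that)
qed

end

section \<open>Existence of a tricoloring satisfying (iii)\<close>

lemma tricoloringD:
  assumes "tricoloring V E (B, R, G)"
  shows "B \<subseteq> V" "R \<subseteq> E" "G \<subseteq> V" "B \<union> \<Union>R \<union> G = V"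
    and "B \<inter> \<Union>R = {}" "B \<inter> G = {}" "\<Union>R \<inter> G = {}"
  using assms unfolding tricoloring_def by auto

lemma cond_iiiD:
  assumes "cond_iii V E (B, R, G)"
  shows "tricoloring V E (B, R, G)"
    and "e1 \<in> R \<Longrightarrow> e2 \<in> R \<Longrightarrow> e1 \<noteq> e2 \<Longrightarrow> e1 \<inter> e2 = {}"
    and "e \<in> E \<Longrightarrow> g \<in> G \<Longrightarrow> g \<in> e \<Longrightarrow> e - {g} \<subseteq> B"
    and "b \<in> B \<Longrightarrow> 2 \<le> card {e \<in> E. b \<in> e \<and> e \<inter> G \<noteq> {}}"
  using assms unfolding cond_iii_def by auto

locale pendant_edge = forest +
  fixes p w :: 'a
  assumes edge: "{p, w} \<in> E"
    and leaf: "{w, y} \<in> E \<Longrightarrow> y = p"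
begin

definition pruned_V :: "'a set" where
  "pruned_V = V - {p, w}"

definition pruned_E :: "'a set set" where
  "pruned_E = {e \<in> E. e \<inter> {p, w} = {}}"

lemma ends_in_V: "p \<in> V" "w \<in> V"
  using edge edge_subset_V by blast+

lemma ends_distinct: "p \<noteq> w"
  using edge by (rule edge_distinct)

lemma card_pruned_V_less: "card pruned_V < card V"
  unfolding pruned_V_def using finite_V ends_in_V by (intro psubset_card_mono) auto

lemma pruned_edges_subset: "pruned_E \<subseteq> E"
  unfolding pruned_E_def by blast

lemma forest_pruned: "forest pruned_V pruned_E"
proof
  show "finite pruned_V"
    unfolding pruned_V_def using finite_V by simp
  show "simple_graph pruned_V pruned_E"
    unfolding simple_graph_def pruned_E_def pruned_V_def by (auto elim!: edgeE)
  show "acyclic_graph pruned_E"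
    using acyclic pruned_edges_subset by (rule acyclic_graph_subset)
qed

lemma removed_edge_contains_p:
  assumes "e \<in> E" and "e \<notin> pruned_E"
  obtains y where "e = {p, y}"
proof -
  have "p \<in> e"
  proof (rule ccontr)
    assume "p \<notin> e"
    then have "w \<in> e"
      using assms unfolding pruned_E_def by blast
    then obtain y where "e = {w, y}"
      using edge_other_end[OF assms(1)] by blast
    with assms(1) \<open>p \<notin> e\<close> show False
      using leaf by blast
  qed
  then show thesis
    using edge_other_end[OF assms(1)] that by blast
qed

lemma card_edges_into_mono:
  assumes "G' \<subseteq> G"
  shows "card {e \<in> pruned_E. b \<in> e \<and> e \<inter> G' \<noteq> {}} \<le> card {e \<in> E. b \<in> e \<and> e \<inter> G \<noteq> {}}"
  using assms pruned_edges_subset finite_E by (intro card_mono) auto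

lemma cond_iii_insert_p:
  assumes T': "cond_iii pruned_V pruned_E (B', R', G')" and q: "{p, q} \<in> E" "q \<in> G'"
  shows "cond_iii V E (insert p B', R', insert w G')"
  unfolding cond_iii_def prod.case
proof (intro conjI ballI impI)
  show "tricoloring V E (insert p B', R', insert w G')"
    using T' ends_in_V ends_distinct pruned_edges_subset
    unfolding cond_iii_def tricoloring_def pruned_V_def by auto
next
  fix e1 e2 assume "e1 \<in> R'" "e2 \<in> R'" "e1 \<noteq> e2"
  then show "e1 \<inter> e2 = {}"
    by (rule cond_iiiD(2)[OF T'])
next
  have G'_pruned: "G' \<subseteq> pruned_V"
    using tricoloringD(3)[OF cond_iiiD(1)[OF T']] .
  fix e g assume e: "e \<in> E" and g: "g \<in> insert w G'" "g \<in> e"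
  have "g \<noteq> p"
    using g G'_pruned ends_distinct unfolding pruned_V_def by blast
  show "e - {g} \<subseteq> insert p B'"
  proof (cases "e \<in> pruned_E")
    case True
    then have "g \<in> G'"
      using g unfolding pruned_E_def by blast
    with True g(2) have "e - {g} \<subseteq> B'"
      by (intro cond_iiiD(3)[OF T'])
    then show ?thesis
      by blast
  next
    case False
    with e obtain y where "e = {p, y}"
      by (rule removed_edge_contains_p)
    with g(2) \<open>g \<noteq> p\<close> show ?thesis
      by auto
  qed
next
  fix b assume b: "b \<in> insert p B'"
  show "2 \<le> card {e \<in> E. b \<in> e \<and> e \<inter> insert w G' \<noteq> {}}"
  proof (cases "b = p")
    case True
    have "q \<noteq> w"
      using q(2) tricoloringD(3)[OF cond_iiiD(1)[OF T']] unfolding pruned_V_def by blast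
    with True q edge show ?thesis
      by (intro two_le_card_edges_into) auto
  next
    case False
    with b T' have "2 \<le> card {e \<in> pruned_E. b \<in> e \<and> e \<inter> G' \<noteq> {}}"
      by (intro cond_iiiD(4)[OF T']) blast
    also have "\<dots> \<le> card {e \<in> E. b \<in> e \<and> e \<inter> insert w G' \<noteq> {}}"
      by (rule card_edges_into_mono) blast
    finally show ?thesis .
  qed
qed

lemma cond_iii_insert_edge:
  assumes T': "cond_iii pruned_V pruned_E (B', R', G')"
    and no_G: "\<And>q. {p, q} \<in> E \<Longrightarrow> q \<notin> G'"
  shows "cond_iii V E (B', insert {p, w} R', G')"
  unfolding cond_iii_def prod.case
proof (intro conjI ballI impI)
  show "tricoloring V E (B', insert {p, w} R', G')"
    using T' ends_in_V edge pruned_edges_subset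
    unfolding cond_iii_def tricoloring_def pruned_V_def by auto
next
  have "e \<inter> {p, w} = {}" if "e \<in> R'" for e
    using that tricoloringD(2)[OF cond_iiiD(1)[OF T']] unfolding pruned_E_def by blast
  moreover fix e1 e2 assume "e1 \<in> insert {p, w} R'" "e2 \<in> insert {p, w} R'" "e1 \<noteq> e2"
  ultimately show "e1 \<inter> e2 = {}"
    using cond_iiiD(2)[OF T'] by auto
next
  fix e g assume e: "e \<in> E" and g: "g \<in> G'" "g \<in> e"
  show "e - {g} \<subseteq> B'"
  proof (cases "e \<in> pruned_E")
    case True
    with g show ?thesis
      by (intro cond_iiiD(3)[OF T'])
  next
    case False
    with e obtain y where "e = {p, y}"
      by (rule removed_edge_contains_p)
    moreover have "p \<notin> G'"
      using tricoloringD(3)[OF cond_iiiD(1)[OF T']] unfolding pruned_V_def by blast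
    ultimately show ?thesis
      using e g no_G by auto
  qed
next
  fix b assume "b \<in> B'"
  then have "2 \<le> card {e \<in> pruned_E. b \<in> e \<and> e \<inter> G' \<noteq> {}}"
    by (rule cond_iiiD(4)[OF T'])
  also have "\<dots> \<le> card {e \<in> E. b \<in> e \<and> e \<inter> G' \<noteq> {}}"
    by (rule card_edges_into_mono) blast
  finally show "2 \<le> card {e \<in> E. b \<in> e \<and> e \<inter> G' \<noteq> {}}" .
qed

end

lemma cond_iii_exists:
  assumes "forest V E"
  shows "\<exists>T. cond_iii V E T"
  using assms
proof (induction "card V" arbitrary: V E rule: less_induct)
  case less
  interpret forest V E
    by (rule less.prems)
  show ?case
  proof (cases "E = {}")
    case True
    then have "cond_iii V E ({}, {}, V)"
      unfolding cond_iii_def tricoloring_def by auto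
    then show ?thesis ..
  next
    case False
    then obtain p w where "{p, w} \<in> E" "\<And>y. {w, y} \<in> E \<Longrightarrow> y = p"
      by (rule leaf_exists) blast
    then interpret pendant_edge V E p w
      by unfold_locales
    obtain B' R' G' where T': "cond_iii pruned_V pruned_E (B', R', G')"
      using less.hyps[OF card_pruned_V_less forest_pruned] by (metis prod_cases3)
    show ?thesis
    proof (cases "\<exists>q. {p, q} \<in> E \<and> q \<in> G'")
      case True
      then show ?thesis
        using cond_iii_insert_p[OF T'] by blast
    next
      case False
      then show ?thesis
        using cond_iii_insert_edge[OF T'] by blast
    qed
  qed
qed

section \<open>A tricoloring satisfying (iii) determines the backbones\<close>

lemma card_le_card_disjoint_blocks:
  assumes "finite R" "\<forall>e\<in>R. finite e" "\<forall>e1\<in>R. \<forall>e2\<in>R. e1 \<noteq> e2 \<longrightarrow> e1 \<inter> e2 = {}"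
    and "P \<subseteq> \<Union>R" and "\<And>e x y. e \<in> R \<Longrightarrow> x \<in> e \<inter> P \<Longrightarrow> y \<in> e \<inter> P \<Longrightarrow> x = y"
  shows "card P \<le> card R"
proof -
  have "P = (\<Union>e\<in>R. e \<inter> P)"
    using assms(4) by blast
  moreover have "card (\<Union>e\<in>R. e \<inter> P) = (\<Sum>e\<in>R. card (e \<inter> P))"
    using assms(1-3) by (intro card_UN_disjoint) auto
  ultimately have "card P = (\<Sum>e\<in>R. card (e \<inter> P))"
    by simp
  also have "\<dots> \<le> (\<Sum>e\<in>R. 1)"
    using assms(2,5) by (intro sum_mono) (simp add: card_le_Suc0_iff_eq)
  finally show ?thesis
    by simp
qed

locale tricolored_tree = forest +
  fixes B :: "'a set" and R :: "'a set set" and G :: "'a set"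
  assumes connected: "connected_graph V E" and V_nonempty: "V \<noteq> {}"
    and cond_iii: "cond_iii V E (B, R, G)"
begin

lemma B_subset: "B \<subseteq> V" and R_subset: "R \<subseteq> E" and G_subset: "G \<subseteq> V"
  and covers_V: "B \<union> \<Union>R \<union> G = V" and B_R_disjoint: "B \<inter> \<Union>R = {}"
  and B_G_disjoint: "B \<inter> G = {}" and R_G_disjoint: "\<Union>R \<inter> G = {}"
  using tricoloringD[OF cond_iiiD(1)[OF cond_iii]] by simp_all

lemma R_disjoint: "e1 \<in> R \<Longrightarrow> e2 \<in> R \<Longrightarrow> e1 \<noteq> e2 \<Longrightarrow> e1 \<inter> e2 = {}"
  by (rule cond_iiiD(2)[OF cond_iii])

lemma G_neighbour_in_B: "e \<in> E \<Longrightarrow> g \<in> G \<Longrightarrow> g \<in> e \<Longrightarrow> e - {g} \<subseteq> B"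
  by (rule cond_iiiD(3)[OF cond_iii])

lemma reachable: "v \<in> V \<Longrightarrow> r \<in> V \<Longrightarrow> (v, r) \<in> (adj_rel E)\<^sup>*"
  using connected unfolding connected_graph_def by blast

lemma B_two_G_neighbours:
  assumes "b \<in> B"
  obtains g1 g2 where "g1 \<noteq> g2" "g1 \<in> G" "g2 \<in> G" "{b, g1} \<in> E" "{b, g2} \<in> E"
proof -
  define S where "S = {e \<in> E. b \<in> e \<and> e \<inter> G \<noteq> {}}"
  have "2 \<le> card S"
    unfolding S_def using cond_iiiD(4)[OF cond_iii assms] .
  moreover have "finite S"
    unfolding S_def using finite_E by simp
  ultimately obtain e1 e2 where "e1 \<in> S" "e2 \<in> S" "e1 \<noteq> e2"
    using card_le_Suc0_iff_eq[of S] by auto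
  moreover have "\<exists>g. g \<in> G \<and> e = {b, g}" if e: "e \<in> S" for e
  proof -
    obtain g where "g \<in> e" "g \<in> G" "e \<in> E" "b \<in> e"
      using e unfolding S_def by blast
    moreover have "b \<noteq> g"
      using assms \<open>g \<in> G\<close> B_G_disjoint by blast
    ultimately show ?thesis
      using edge_eq_doubleton by blast
  qed
  ultimately show thesis
    using that unfolding S_def by blast
qed

lemma B_has_G_child:
  assumes "r \<in> V" and "b \<in> B"
  shows "\<exists>g. g \<in> G \<and> tree_parent E r b g"
proof -
  obtain g1 g2 where g: "g1 \<noteq> g2" "g1 \<in> G" "g2 \<in> G" "{b, g1} \<in> E" "{b, g2} \<in> E"
    using assms(2) by (rule B_two_G_neighbours)
  have "(b, r) \<in> (adj_rel E)\<^sup>*"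
    using assms B_subset reachable by blast
  then have "tree_parent E r b g1 \<or> tree_parent E r g1 b" "tree_parent E r b g2 \<or> tree_parent E r g2 b"
    using tree_parent_edge g(4,5) by blast+
  moreover have "\<not> (tree_parent E r g1 b \<and> tree_parent E r g2 b)"
    using tree_parent_unique g(1) by blast
  ultimately show ?thesis
    using g(2,3) by blast
qed

definition G_child :: "'a \<Rightarrow> 'a \<Rightarrow> 'a" where
  "G_child r b = (SOME g. g \<in> G \<and> tree_parent E r b g)"

lemma G_child_spec: "r \<in> V \<Longrightarrow> b \<in> B \<Longrightarrow> G_child r b \<in> G \<and> tree_parent E r b (G_child r b)"
  unfolding G_child_def by (rule someI_ex) (rule B_has_G_child)

definition rooted_matching :: "'a \<Rightarrow> 'a set set" where
  "rooted_matching r = R \<union> (\<lambda>b. {b, G_child r b}) ` B"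

lemma G_child_edges_disjoint:
  assumes "r \<in> V" "b1 \<in> B" "b2 \<in> B" "b1 \<noteq> b2"
  shows "{b1, G_child r b1} \<inter> {b2, G_child r b2} = {}"
proof -
  have g1: "G_child r b1 \<in> G" "tree_parent E r b1 (G_child r b1)"
    using G_child_spec[OF assms(1,2)] by simp_all
  have g2: "G_child r b2 \<in> G" "tree_parent E r b2 (G_child r b2)"
    using G_child_spec[OF assms(1,3)] by simp_all
  have "G_child r b1 \<noteq> G_child r b2"
  proof
    assume "G_child r b1 = G_child r b2"
    with g1(2) g2(2) have "b1 = b2"
      by (simp add: tree_parent_unique)
    with assms(4) show False ..
  qed
  moreover note g1(1) g2(1)
  ultimately show ?thesis
    using assms(2-4) B_G_disjoint by blast
qed

lemma R_G_child_edge_disjoint: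
  assumes "r \<in> V" "e \<in> R" "b \<in> B"
  shows "e \<inter> {b, G_child r b} = {}"
proof -
  have "G_child r b \<in> G"
    using G_child_spec[OF assms(1,3)] by simp
  with assms(2,3) show ?thesis
    using B_R_disjoint R_G_disjoint by blast
qed

lemma matching_rooted_matching:
  assumes "r \<in> V"
  shows "matching E (rooted_matching r)"
  unfolding matching_def
proof (intro conjI ballI impI)
  show "rooted_matching r \<subseteq> E"
    using R_subset G_child_spec[OF assms] unfolding rooted_matching_def tree_parent_def by auto
  fix e1 e2 assume "e1 \<in> rooted_matching r" "e2 \<in> rooted_matching r" "e1 \<noteq> e2"
  then consider "e1 \<in> R" "e2 \<in> R"
    | b where "b \<in> B" "e1 \<in> R" "e2 = {b, G_child r b}"
    | b where "b \<in> B" "e2 \<in> R" "e1 = {b, G_child r b}"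
    | b1 b2 where "b1 \<in> B" "b2 \<in> B" "b1 \<noteq> b2" "e1 = {b1, G_child r b1}" "e2 = {b2, G_child r b2}"
    unfolding rooted_matching_def by blast
  then show "e1 \<inter> e2 = {}"
  proof cases
    case 1
    then show ?thesis
      using R_disjoint \<open>e1 \<noteq> e2\<close> by blast
  next
    case 2
    then show ?thesis
      using R_G_child_edge_disjoint[OF assms] by blast
  next
    case 3
    then show ?thesis
      using R_G_child_edge_disjoint[OF assms] by blast
  next
    case 4
    then show ?thesis
      using G_child_edges_disjoint[OF assms] by blast
  qed
qed

lemma card_rooted_matching:
  assumes "r \<in> V"
  shows "card (rooted_matching r) = card B + card R"
proof -
  have "inj_on (\<lambda>b. {b, G_child r b}) B"
    using G_child_edges_disjoint[OF assms] by (intro inj_onI) blast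
  moreover have "R \<inter> (\<lambda>b. {b, G_child r b}) ` B = {}"
    using R_G_child_edge_disjoint[OF assms] by blast
  moreover have "finite R" "finite B"
    using R_subset B_subset finite_E finite_V finite_subset by blast+
  ultimately show ?thesis
    unfolding rooted_matching_def by (simp add: card_Un_disjoint card_image)
qed

lemma rooted_matching_avoids_root:
  assumes "g \<in> G" "e \<in> rooted_matching g"
  shows "g \<notin> e"
proof (cases "e \<in> R")
  case True
  with assms(1) show ?thesis
    using R_G_disjoint by blast
next
  case False
  with assms(2) obtain b where "b \<in> B" "e = {b, G_child g b}"
    unfolding rooted_matching_def by blast
  moreover have "g \<noteq> G_child g b"
  proof
    have "g \<in> V"
      using assms(1) G_subset by blast
    then have "tree_parent E g b (G_child g b)"
      using G_child_spec \<open>b \<in> B\<close> by blast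
    moreover assume "g = G_child g b"
    ultimately show False
      using tree_parent_root by metis
  qed
  ultimately show ?thesis
    using assms(1) B_G_disjoint by blast
qed

definition rooted_cover :: "'a \<Rightarrow> 'a set" where
  "rooted_cover r = B \<union> {x. \<exists>y. {x, y} \<in> R \<and> tree_parent E r x y}"

lemma child_in_rooted_cover:
  assumes "u \<in> V" and xy: "tree_parent E u x y" "{x, y} \<notin> R" and "y \<in> \<Union>R"
  shows "y \<in> rooted_cover u"
proof -
  obtain e where "e \<in> R" "y \<in> e"
    using \<open>y \<in> \<Union>R\<close> by blast
  then obtain y' where y': "{y, y'} \<in> R"
    using R_subset edge_other_end by blast
  then have "y' \<noteq> x"
    using xy(2) by (auto simp: insert_commute)
  have "y \<in> V"
    using y' R_subset edge_subset_V by blast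
  moreover have "{y, y'} \<in> E"
    using y' R_subset by blast
  ultimately have "tree_parent E u y y' \<or> tree_parent E u y' y"
    using reachable[OF _ assms(1)] tree_parent_edge by blast
  moreover have "\<not> tree_parent E u y' y"
    using \<open>y' \<noteq> x\<close> tree_parent_unique[OF _ xy(1)] by blast
  ultimately show ?thesis
    using y' unfolding rooted_cover_def by blast
qed

lemma rooted_cover_covers_edge:
  assumes "u \<in> V" and "tree_parent E u x y"
  shows "x \<in> rooted_cover u \<or> y \<in> rooted_cover u"
proof -
  have "{x, y} \<in> E"
    using assms(2) unfolding tree_parent_def by blast
  consider "x \<in> B \<or> y \<in> B" | "x \<in> G \<or> y \<in> G" | "x \<in> \<Union>R" "y \<in> \<Union>R"
    using covers_V edge_subset_V[OF \<open>{x, y} \<in> E\<close>] by blast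
  then show ?thesis
  proof cases
    case 1
    then show ?thesis
      unfolding rooted_cover_def by blast
  next
    case 2
    then have "x \<in> B \<or> y \<in> B"
      using G_neighbour_in_B[OF \<open>{x, y} \<in> E\<close>] edge_distinct[OF \<open>{x, y} \<in> E\<close>] by blast
    then show ?thesis
      unfolding rooted_cover_def by blast
  next
    case 3
    then show ?thesis
      using assms child_in_rooted_cover unfolding rooted_cover_def by blast
  qed
qed

lemma vertex_cover_rooted_cover:
  assumes "u \<in> V"
  shows "vertex_cover V E (rooted_cover u)"
  unfolding vertex_cover_def
proof (intro conjI ballI)
  show "rooted_cover u \<subseteq> V"
    unfolding rooted_cover_def using B_subset R_subset edge_subset_V by blast
  fix e assume "e \<in> E"
  then obtain x y where "x \<in> V" "e = {x, y}"
    by (rule edgeE)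
  with \<open>e \<in> E\<close> have "tree_parent E u x y \<or> tree_parent E u y x"
    using tree_parent_edge reachable[OF _ assms] by blast
  with \<open>e = {x, y}\<close> show "e \<inter> rooted_cover u \<noteq> {}"
    using rooted_cover_covers_edge[OF assms] by blast
qed

lemma card_upper_ends_le: "card {x. \<exists>y. {x, y} \<in> R \<and> tree_parent E u x y} \<le> card R"
  (is "card ?P \<le> _")
proof (rule card_le_card_disjoint_blocks)
  show "finite R"
    using R_subset finite_E finite_subset by blast
  show "\<forall>e\<in>R. finite e"
    using R_subset edge_subset_V finite_V finite_subset by blast
  show "?P \<subseteq> \<Union>R"
    by blast
  show "\<forall>e1\<in>R. \<forall>e2\<in>R. e1 \<noteq> e2 \<longrightarrow> e1 \<inter> e2 = {}"
    using R_disjoint by blast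
next
  have parent: "tree_parent E u a b" if a: "a \<in> ?P" and ab: "{a, b} \<in> R" "a \<noteq> b" for a b
  proof -
    obtain b' where "{a, b'} \<in> R" "tree_parent E u a b'"
      using a by blast
    moreover have "{a, b'} = {a, b}"
      using R_disjoint[OF \<open>{a, b'} \<in> R\<close> ab(1)] by blast
    ultimately show ?thesis
      using ab(2) by (auto simp: doubleton_eq_iff)
  qed
  fix e x y assume e: "e \<in> R" and x: "x \<in> e \<inter> ?P" and y: "y \<in> e \<inter> ?P"
  show "x = y"
  proof (rule ccontr)
    assume "x \<noteq> y"
    then have "e = {x, y}" "{y, x} = e"
      using e x y R_subset edge_eq_doubleton by blast+
    then have "tree_parent E u x y" "tree_parent E u y x"
      using parent e x y \<open>x \<noteq> y\<close> by auto
    then show False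
      using tree_parent_asym by blast
  qed
qed

lemma card_rooted_cover_le: "card (rooted_cover u) \<le> card B + card R"
  unfolding rooted_cover_def by (rule order_trans[OF card_Un_le]) (simp add: card_upper_ends_le)

lemma card_rooted_cover:
  assumes "u \<in> V"
  shows "card (rooted_cover u) = card B + card R"
  using card_rooted_cover_le[of u] card_rooted_matching[OF assms]
    card_matching_le_card_cover[OF finite_V matching_rooted_matching vertex_cover_rooted_cover, OF assms assms]
  by simp

lemma min_vertex_cover_iff: "min_vertex_cover V E C \<longleftrightarrow> vertex_cover V E C \<and> card C = card B + card R"
proof -
  obtain r where "r \<in> V"
    using V_nonempty by blast
  then show ?thesis
    using min_vertex_cover_iff_card[OF finite_V matching_rooted_matching vertex_cover_rooted_cover]
      card_rooted_cover card_rooted_matching by simp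
qed

lemma max_matching_iff: "max_matching E M \<longleftrightarrow> matching E M \<and> card M = card B + card R"
proof -
  obtain r where "r \<in> V"
    using V_nonempty by blast
  then show ?thesis
    using max_matching_iff_card[OF finite_V matching_rooted_matching vertex_cover_rooted_cover]
      card_rooted_cover card_rooted_matching by simp
qed

lemma min_vertex_cover_rooted_cover: "u \<in> V \<Longrightarrow> min_vertex_cover V E (rooted_cover u)"
  using min_vertex_cover_iff vertex_cover_rooted_cover card_rooted_cover by blast

lemma max_matching_rooted_matching: "r \<in> V \<Longrightarrow> max_matching E (rooted_matching r)"
  using max_matching_iff matching_rooted_matching card_rooted_matching by blast

lemma min_vertex_cover_subset_max_matching:
  assumes "min_vertex_cover V E C" "max_matching E M"
  shows "C \<subseteq> \<Union>M"
proof -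
  have "matching E M" "vertex_cover V E C" "card C \<le> card M"
    using assms min_vertex_cover_iff max_matching_iff by auto
  then show ?thesis
    by (rule tight_matching_cover(1)[OF finite_V])
qed

lemma max_matching_edge_not_subset_min_vertex_cover:
  assumes "min_vertex_cover V E C" "max_matching E M" "e \<in> M"
  shows "\<not> e \<subseteq> C"
proof
  assume "e \<subseteq> C"
  have "e \<in> E"
    using assms(2,3) unfolding max_matching_def matching_def by blast
  then obtain x y where "x \<noteq> y" "e = {x, y}"
    by (rule edgeE)
  moreover have "matching E M" "vertex_cover V E C" "card C \<le> card M"
    using assms min_vertex_cover_iff max_matching_iff by auto
  then have "x = y" if "x \<in> e \<inter> C" "y \<in> e \<inter> C"
    using tight_matching_cover(2)[OF finite_V] assms(3) that by blast
  ultimately show False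
    using \<open>e \<subseteq> C\<close> by blast
qed

lemma min_vertex_cover_disjoint_G:
  assumes "min_vertex_cover V E C"
  shows "C \<inter> G = {}"
proof (rule ccontr)
  assume "C \<inter> G \<noteq> {}"
  then obtain g where "g \<in> C" "g \<in> G"
    by blast
  then have "g \<in> \<Union>(rooted_matching g)"
    using min_vertex_cover_subset_max_matching[OF assms max_matching_rooted_matching] G_subset by blast
  then show False
    using rooted_matching_avoids_root[OF \<open>g \<in> G\<close>] by blast
qed

lemma B_subset_min_vertex_cover:
  assumes "min_vertex_cover V E C"
  shows "B \<subseteq> C"
proof
  fix b assume "b \<in> B"
  then obtain g1 g2 where "g1 \<in> G" "{b, g1} \<in> E"
    by (rule B_two_G_neighbours)
  moreover have "vertex_cover V E C"
    using assms unfolding min_vertex_cover_def by simp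
  ultimately have "{b, g1} \<inter> C \<noteq> {}"
    unfolding vertex_cover_def by blast
  moreover have "g1 \<notin> C"
    using min_vertex_cover_disjoint_G[OF assms] \<open>g1 \<in> G\<close> by blast
  ultimately show "b \<in> C"
    by blast
qed

lemma R_edge_not_subset_min_vertex_cover:
  assumes "min_vertex_cover V E C" "e \<in> R"
  shows "\<not> e \<subseteq> C"
proof -
  obtain r where "r \<in> V"
    using V_nonempty by blast
  then have "max_matching E (rooted_matching r)"
    by (rule max_matching_rooted_matching)
  moreover have "e \<in> rooted_matching r"
    using assms(2) unfolding rooted_matching_def by blast
  ultimately show ?thesis
    using max_matching_edge_not_subset_min_vertex_cover[OF assms(1)] by blast
qed

lemma root_in_rooted_cover:
  assumes "u \<in> \<Union>R"
  shows "u \<in> rooted_cover u"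
proof -
  obtain e where "e \<in> R" "u \<in> e"
    using assms by blast
  then obtain u' where "{u, u'} \<in> R"
    using R_subset edge_other_end by blast
  moreover have "u \<in> V"
    using \<open>e \<in> R\<close> \<open>u \<in> e\<close> R_subset edge_subset_V by blast
  ultimately have "tree_parent E u u u'"
    using tree_parent_edge[OF _ rtrancl_refl, of u u'] R_subset tree_parent_root by blast
  with \<open>{u, u'} \<in> R\<close> show ?thesis
    unfolding rooted_cover_def by blast
qed

lemma neighbour_in_rooted_cover:
  assumes "{u, w} \<in> E" "{u, w} \<notin> R" "w \<in> \<Union>R"
  shows "w \<in> rooted_cover u"
proof -
  have "u \<in> V"
    using assms(1) edge_subset_V by blast
  moreover have "tree_parent E u u w"
    using tree_parent_edge[OF assms(1) rtrancl_refl] tree_parent_root by blast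
  ultimately show ?thesis
    using assms(2,3) by (rule child_in_rooted_cover)
qed

lemma pos_vertex_backbone_eq: "pos_vertex_backbone V E = B"
proof
  show "B \<subseteq> pos_vertex_backbone V E"
    unfolding pos_vertex_backbone_def using B_subset B_subset_min_vertex_cover by blast
next
  show "pos_vertex_backbone V E \<subseteq> B"
  proof
    fix v assume "v \<in> pos_vertex_backbone V E"
    then have "v \<in> V" and in_min: "\<And>C. min_vertex_cover V E C \<Longrightarrow> v \<in> C"
      unfolding pos_vertex_backbone_def by blast+
    have "v \<notin> G"
      using in_min[OF min_vertex_cover_rooted_cover[OF \<open>v \<in> V\<close>]]
        min_vertex_cover_disjoint_G[OF min_vertex_cover_rooted_cover[OF \<open>v \<in> V\<close>]] by blast
    moreover have "v \<notin> \<Union>R"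
    proof
      assume "v \<in> \<Union>R"
      then obtain e where "e \<in> R" "v \<in> e"
        by blast
      then obtain v' where e: "e = {v, v'}"
        using R_subset edge_other_end by blast
      then have "v' \<in> \<Union>R" "v' \<in> V"
        using \<open>e \<in> R\<close> R_subset edge_subset_V by blast+
      then have "e \<subseteq> rooted_cover v'"
        using e root_in_rooted_cover in_min[OF min_vertex_cover_rooted_cover] by blast
      then show False
        using R_edge_not_subset_min_vertex_cover[OF min_vertex_cover_rooted_cover \<open>e \<in> R\<close>]
          \<open>v' \<in> V\<close> by blast
    qed
    ultimately show "v \<in> B"
      using \<open>v \<in> V\<close> covers_V by blast
  qed
qed

lemma neg_vertex_backbone_eq: "neg_vertex_backbone V E = G"
proof
  show "G \<subseteq> neg_vertex_backbone V E"
    unfolding neg_vertex_backbone_def using G_subset min_vertex_cover_disjoint_G by blast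
next
  show "neg_vertex_backbone V E \<subseteq> G"
  proof
    fix v assume "v \<in> neg_vertex_backbone V E"
    then have "v \<in> V" and not_in_min: "\<And>C. min_vertex_cover V E C \<Longrightarrow> v \<notin> C"
      unfolding neg_vertex_backbone_def by blast+
    have "v \<notin> B"
      using not_in_min[OF min_vertex_cover_rooted_cover[OF \<open>v \<in> V\<close>]]
      unfolding rooted_cover_def by blast
    moreover have "v \<notin> \<Union>R"
      using not_in_min[OF min_vertex_cover_rooted_cover[OF \<open>v \<in> V\<close>]] root_in_rooted_cover by blast
    ultimately show "v \<in> G"
      using \<open>v \<in> V\<close> covers_V by blast
  qed
qed

lemma degenerate_iff: "degenerate V E v \<longleftrightarrow> v \<in> \<Union>R"
  unfolding degenerate_def pos_vertex_backbone_eq neg_vertex_backbone_eq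
  using covers_V B_R_disjoint R_G_disjoint by blast

lemma exclusive_edges_eq: "exclusive_edges V E = R"
proof
  show "R \<subseteq> exclusive_edges V E"
    unfolding exclusive_edges_def degenerate_iff
    using R_subset R_edge_not_subset_min_vertex_cover by blast
next
  show "exclusive_edges V E \<subseteq> R"
  proof
    fix e assume "e \<in> exclusive_edges V E"
    then have "e \<in> E" and e_R: "e \<subseteq> \<Union>R"
      and no_min: "\<not> (\<exists>C. min_vertex_cover V E C \<and> e \<subseteq> C)"
      unfolding exclusive_edges_def degenerate_iff by blast+
    obtain x y where "x \<in> V" "e = {x, y}"
      using \<open>e \<in> E\<close> by (rule edgeE)
    show "e \<in> R"
    proof (rule ccontr)
      assume "e \<notin> R"
      then have "e \<subseteq> rooted_cover x"
        using \<open>e \<in> E\<close> \<open>e = {x, y}\<close> e_R root_in_rooted_cover neighbour_in_rooted_cover by blast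
      then show False
        using no_min min_vertex_cover_rooted_cover[OF \<open>x \<in> V\<close>] by blast
    qed
  qed
qed

lemma neighbour_outside_rooted_cover:
  assumes "{x, y} \<in> R" and "{x, z} \<in> E" and "z \<notin> rooted_cover x"
  shows "z = y"
proof (rule ccontr)
  assume "z \<noteq> y"
  have "x \<in> \<Union>R"
    using assms(1) by blast
  have "z \<notin> B"
    using assms(3) unfolding rooted_cover_def by blast
  moreover have "z \<notin> G"
    using G_neighbour_in_B[OF assms(2)] edge_distinct[OF assms(2)] \<open>x \<in> \<Union>R\<close> B_R_disjoint
    by blast
  moreover have "z \<notin> \<Union>R"
  proof
    assume "z \<in> \<Union>R"
    have "{x, z} \<notin> R"
    proof
      assume "{x, z} \<in> R"
      then have "{x, y} = {x, z}"
        using R_disjoint[OF assms(1)] by blast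
      with \<open>z \<noteq> y\<close> show False
        by (auto simp: doubleton_eq_iff)
    qed
    with assms(2) have "z \<in> rooted_cover x"
      using \<open>z \<in> \<Union>R\<close> by (rule neighbour_in_rooted_cover)
    with assms(3) show False ..
  qed
  moreover have "z \<in> V"
    using assms(2) edge_subset_V by blast
  ultimately show False
    using covers_V by blast
qed

lemma R_subset_max_matching:
  assumes M: "max_matching E M"
  shows "R \<subseteq> M"
proof
  fix e assume "e \<in> R"
  then obtain x y where "x \<in> V" "e = {x, y}"
    using R_subset edgeE by (metis subsetD)
  then have "x \<in> \<Union>R"
    using \<open>e \<in> R\<close> by blast
  have C: "min_vertex_cover V E (rooted_cover x)"
    using \<open>x \<in> V\<close> by (rule min_vertex_cover_rooted_cover)
  have x_C: "x \<in> rooted_cover x"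
    using \<open>x \<in> \<Union>R\<close> by (rule root_in_rooted_cover)
  then obtain e' where "e' \<in> M" "x \<in> e'"
    using min_vertex_cover_subset_max_matching[OF C M] by blast
  moreover have "e' \<in> E"
    using \<open>e' \<in> M\<close> M unfolding max_matching_def matching_def by blast
  ultimately obtain z where z: "e' = {x, z}"
    using edge_other_end by blast
  have "z \<notin> rooted_cover x"
    using max_matching_edge_not_subset_min_vertex_cover[OF C M \<open>e' \<in> M\<close>] z x_C by blast
  then have "z = y"
    using neighbour_outside_rooted_cover \<open>e \<in> R\<close> \<open>e = {x, y}\<close> \<open>e' \<in> E\<close> z by blast
  with \<open>e' \<in> M\<close> z \<open>e = {x, y}\<close> show "e \<in> M"
    by simp
qed

lemma pos_edge_backbone_eq: "pos_edge_backbone E = R"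
proof
  show "R \<subseteq> pos_edge_backbone E"
    unfolding pos_edge_backbone_def using R_subset R_subset_max_matching by blast
next
  show "pos_edge_backbone E \<subseteq> R"
  proof
    fix e assume "e \<in> pos_edge_backbone E"
    then have "e \<in> E" and in_max: "\<And>M. max_matching E M \<Longrightarrow> e \<in> M"
      unfolding pos_edge_backbone_def by blast+
    show "e \<in> R"
    proof (cases "e \<inter> G = {}")
      case True
      obtain r where "r \<in> V"
        using V_nonempty by blast
      then have "e \<in> rooted_matching r"
        using in_max max_matching_rooted_matching by blast
      with True show ?thesis
        unfolding rooted_matching_def using G_child_spec[OF \<open>r \<in> V\<close>] by blast
    next
      case False
      then obtain g where "g \<in> e" "g \<in> G"
        by blast
      then have "e \<in> rooted_matching g"
        using in_max max_matching_rooted_matching G_subset by blast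
      then show ?thesis
        using rooted_matching_avoids_root \<open>g \<in> e\<close> \<open>g \<in> G\<close> by blast
    qed
  qed
qed

lemma optional_vertices_eq: "optional_vertices V E = G"
proof
  show "G \<subseteq> optional_vertices V E"
    unfolding optional_vertices_def
    using G_subset max_matching_rooted_matching rooted_matching_avoids_root by blast
next
  show "optional_vertices V E \<subseteq> G"
  proof
    fix v assume "v \<in> optional_vertices V E"
    then obtain M where "v \<in> V" "max_matching E M" and unmatched: "\<And>e. e \<in> M \<Longrightarrow> v \<notin> e"
      unfolding optional_vertices_def by blast
    have "v \<notin> B"
      using min_vertex_cover_subset_max_matching[OF min_vertex_cover_rooted_cover[OF \<open>v \<in> V\<close>]
          \<open>max_matching E M\<close>] unmatched
      unfolding rooted_cover_def by blast
    moreover have "v \<notin> \<Union>R"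
      using R_subset_max_matching[OF \<open>max_matching E M\<close>] unmatched by blast
    ultimately show "v \<in> G"
      using \<open>v \<in> V\<close> covers_V by blast
  qed
qed

lemma unavoidable_vertices_eq: "unavoidable_vertices V E = B"
  unfolding unavoidable_vertices_def optional_vertices_eq pos_edge_backbone_eq
  using covers_V B_R_disjoint B_G_disjoint by blast

lemma triple_i_eq: "triple_i V E = (B, R, G)"
  unfolding triple_i_def pos_vertex_backbone_eq exclusive_edges_eq neg_vertex_backbone_eq ..

lemma triple_ii_eq: "triple_ii V E = (B, R, G)"
  unfolding triple_ii_def unavoidable_vertices_eq pos_edge_backbone_eq optional_vertices_eq ..

end

lemma triples_eq_cond_iii:
  assumes "finite_tree V E" and "cond_iii V E T"
  shows "triple_i V E = T" and "triple_ii V E = T"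
proof -
  obtain B R G where T: "T = (B, R, G)"
    by (rule prod_cases3)
  interpret tricolored_tree V E B R G
    using assms unfolding finite_tree_def T by unfold_locales auto
  show "triple_i V E = T" "triple_ii V E = T"
    using triple_i_eq triple_ii_eq T by simp_all
qed

theorem theorem1:
  fixes V :: "'a set" and E :: "'a set set"
  assumes "finite_tree V E"
  shows "tricoloring V E (triple_i V E) \<and> tricoloring V E (triple_ii V E) \<and>
         (\<exists>!T. cond_iii V E T) \<and>
         cond_iii V E (triple_i V E) \<and> triple_i V E = triple_ii V E"
proof -
  have "forest V E"
    using assms unfolding finite_tree_def by unfold_locales auto
  then obtain T where T: "cond_iii V E T"
    using cond_iii_exists by blast
  have "T' = T" if "cond_iii V E T'" for T'
    using triples_eq_cond_iii(1)[OF assms] that T by metis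
  then have "\<exists>!T. cond_iii V E T"
    using T by blast
  moreover have "tricoloring V E T"
    using T unfolding cond_iii_def by blast
  ultimately show ?thesis
    using T triples_eq_cond_iii[OF assms T] by simp
qed

end
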